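(* Let $\mathcal V$ be a finite set, $2\le k\le|\mathcal V|-2$, and suppose that the code $\Gamma\subset\binom{\mathcal V}{k}$ admits a subgroup $G\le{\rm Aut}(\Gamma)\cap{\rm Sym}(\mathcal V)$ such that $\Gamma$ is $G$-neighbour-transitive and $G$ is intransitive on $\mathcal V$. Then there is a proper non-empty subset $\mathcal U\subset\mathcal V$ such that: $\Gamma$ is the set of all $k$-subsets of $\mathcal U$ if $|\mathcal U|>k$; $\Gamma=\{\mathcal U\}$ if $|\mathcal U|=k$; $\Gamma$ is the set of all $k$-subsets of $\mathcal V$ containing $\mathcal U$ if $|\mathcal U|<k$.
   Context: The Johnson graph $J(|\mathcal V|,k)$ has vertex set $\binom{\mathcal V}{k}$, the $k$-subsets of $\mathcal V$, two being adjacent iff they meet in $k-1$ points. A code is a proper non-empty subset $\Gamma\subset\binom{\mathcal V}{k}$; its neighbour set $\Gamma_1$ is the set of $k$-subsets not in $\Gamma$ adjacent to some codeword. ${\rm Aut}(\Gamma)$ is the setwise stabiliser of $\Gamma$ in ${\rm Aut}(J(|\mathcal V|,k))$. $\Gamma$ is $G$-neighbour-transitive if $G$ is transitive on both $\Gamma$ and $\Gamma_1$. *)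

theory Defs
  imports "HOL-Combinatorics.Permutations"
begin

definition ksubsets :: "'a set \<Rightarrow> nat \<Rightarrow> 'a set set" where
  "ksubsets V k = {S. S \<subseteq> V \<and> card S = k}"

definition johnson_adj :: "nat \<Rightarrow> 'a set \<Rightarrow> 'a set \<Rightarrow> bool" where
  "johnson_adj k S T \<longleftrightarrow> card (S \<inter> T) = k - 1"

definition is_code :: "'a set \<Rightarrow> nat \<Rightarrow> 'a set set \<Rightarrow> bool" where
  "is_code V k \<Gamma> \<longleftrightarrow> \<Gamma> \<subseteq> ksubsets V k \<and> \<Gamma> \<noteq> {} \<and> \<Gamma> \<noteq> ksubsets V k"

definition neighbour_set :: "'a set \<Rightarrow> nat \<Rightarrow> 'a set set \<Rightarrow> 'a set set" where
  "neighbour_set V k \<Gamma> =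
     {T \<in> ksubsets V k. T \<notin> \<Gamma> \<and> (\<exists>S\<in>\<Gamma>. johnson_adj k S T)}"

definition perm_group_on :: "'a set \<Rightarrow> ('a \<Rightarrow> 'a) set \<Rightarrow> bool" where
  "perm_group_on V G \<longleftrightarrow> (\<forall>g\<in>G. g permutes V) \<and> id \<in> G \<and>
     (\<forall>g\<in>G. \<forall>h\<in>G. g \<circ> h \<in> G) \<and> (\<forall>g\<in>G. inv g \<in> G)"

text \<open>G stabilises the code setwise (G \<le> Aut(Gamma), acting on k-subsets by images).\<close>
definition stabilises :: "('a \<Rightarrow> 'a) set \<Rightarrow> 'a set set \<Rightarrow> bool" where
  "stabilises G \<Gamma> \<longleftrightarrow> (\<forall>g\<in>G. (\<lambda>S. g ` S) ` \<Gamma> = \<Gamma>)"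

definition set_transitive :: "('a \<Rightarrow> 'a) set \<Rightarrow> 'a set set \<Rightarrow> bool" where
  "set_transitive G X \<longleftrightarrow> (\<forall>S\<in>X. \<forall>T\<in>X. \<exists>g\<in>G. g ` S = T)"

definition neighbour_transitive :: "'a set \<Rightarrow> nat \<Rightarrow> ('a \<Rightarrow> 'a) set \<Rightarrow> 'a set set \<Rightarrow> bool" where
  "neighbour_transitive V k G \<Gamma> \<longleftrightarrow>
     set_transitive G \<Gamma> \<and> set_transitive G (neighbour_set V k \<Gamma>)"

definition point_transitive :: "('a \<Rightarrow> 'a) set \<Rightarrow> 'a set \<Rightarrow> bool" where
  "point_transitive G V \<longleftrightarrow> (\<forall>x\<in>V. \<forall>y\<in>V. \<exists>g\<in>G. g x = y)"

end

theory Submission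
  imports Defs
begin

text \<open>Let \<open>W\<close> be a \<open>G\<close>-orbit on \<open>V\<close>; both \<open>W\<close> and its complement are
  \<open>G\<close>-invariant, so \<open>|S \<inter> W|\<close> takes a single value \<open>c\<close> on \<open>\<Gamma>\<close> and a single value on \<open>\<Gamma>\<^sub>1\<close>.
  Exchanging one point of a codeword changes \<open>|S \<inter> W|\<close> by \<open>-1\<close>, \<open>0\<close> or \<open>+1\<close>, and exchanged
  sets not in \<open>\<Gamma>\<close> lie in \<open>\<Gamma>\<^sub>1\<close>. Choosing \<open>W\<close> or its complement so that some exchange lowers
  the value, the neighbours have value \<open>c - 1\<close>. Hence \<open>\<Gamma>\<close> is closed under exchanges
  inside \<open>W\<close> and inside its complement, and no exchange can raise the value, which forces
  \<open>S \<subseteq> W\<close> or \<open>W \<subseteq> S\<close> for the codewords. Connectivity of the Johnson graph then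
  identifies \<open>\<Gamma>\<close> with all \<open>k\<close>-subsets of \<open>W\<close>, or all \<open>k\<close>-sets containing \<open>W\<close>.\<close>

lemma ksubsets_finite: "finite V \<Longrightarrow> S \<in> ksubsets V k \<Longrightarrow> finite S"
  unfolding ksubsets_def by (auto intro: finite_subset)

lemma card_exchange:
  assumes "finite S" "a \<in> S" "b \<notin> S"
  shows "card (insert b (S - {a})) = card S"
proof -
  have "card S > 0" using assms card_gt_0_iff by blast
  then show ?thesis using assms by simp
qed

lemma card_Int_exchange:
  assumes "finite S" "a \<in> S" "b \<notin> S"
  shows "card (insert b (S - {a}) \<inter> W) + of_bool (a \<in> W) = card (S \<inter> W) + of_bool (b \<in> W)"
proof -
  have "insert b (S - {a}) \<inter> W = (if b \<in> W then insert b (S \<inter> W - {a}) else S \<inter> W - {a})"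
    by auto
  moreover have "card (S \<inter> W - {a}) + of_bool (a \<in> W) = card (S \<inter> W)"
  proof (cases "a \<in> W")
    case True
    then have "card (S \<inter> W) > 0" using assms card_gt_0_iff by blast
    then show ?thesis using True assms by simp
  qed simp
  ultimately show ?thesis
    using assms by (cases "b \<in> W") auto
qed

lemma exchange_in_neighbour_set:
  assumes "finite V" "\<Gamma> \<subseteq> ksubsets V k" "S \<in> \<Gamma>" "a \<in> S" "b \<in> V - S"
    and "insert b (S - {a}) \<notin> \<Gamma>"
  shows "insert b (S - {a}) \<in> neighbour_set V k \<Gamma>"
proof -
  have S: "S \<subseteq> V" "card S = k"
    using assms(2,3) unfolding ksubsets_def by auto
  have "finite S"
    using ksubsets_finite[OF assms(1)] assms(2,3) by blast
  have "insert b (S - {a}) \<in> ksubsets V k"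
    using S assms(5) card_exchange[OF \<open>finite S\<close> assms(4)] unfolding ksubsets_def by auto
  moreover have "S \<inter> insert b (S - {a}) = S - {a}"
    using assms(5) by blast
  then have "johnson_adj k S (insert b (S - {a}))"
    using S(2) \<open>finite S\<close> assms(4) unfolding johnson_adj_def by simp
  ultimately show ?thesis
    using assms(3,6) unfolding neighbour_set_def by blast
qed

lemma card_Int_const_if_set_transitive:
  assumes "set_transitive G X" "\<forall>g\<in>G. inj g \<and> g ` W = W" "S \<in> X" "T \<in> X"
  shows "card (S \<inter> W) = card (T \<inter> W)"
proof -
  obtain g where g: "g \<in> G" "g ` S = T"
    using assms(1,3,4) unfolding set_transitive_def by meson
  have inj: "inj g" "g ` W = W"
    using assms(2) g(1) by auto
  then have "T \<inter> W = g ` (S \<inter> W)"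
    using g(2) by (simp add: image_Int)
  then show ?thesis
    using inj(1) by (simp add: card_image inj_on_subset)
qed

text \<open>Connectivity of the Johnson graph on the \<open>k\<close>-sets containing \<open>U\<close>: each exchange
  lowers \<open>|S - T|\<close> by one.\<close>

lemma exchange_closed_family_eq:
  assumes "finite V" "A \<noteq> {}" "A \<subseteq> {S \<in> ksubsets V k. U \<subseteq> S}"
    and closed: "\<And>S a b. S \<in> A \<Longrightarrow> a \<in> S - U \<Longrightarrow> b \<in> V - S \<Longrightarrow> insert b (S - {a}) \<in> A"
  shows "A = {S \<in> ksubsets V k. U \<subseteq> S}"
proof
  have reach: "T \<in> A"
    if T: "T \<in> ksubsets V k" "U \<subseteq> T" and "S \<in> A" "card (S - T) = n" for S T n
    using that(3,4)
  proof (induction n arbitrary: S)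
    case 0
    have S: "S \<subseteq> V" "card S = k" and T': "T \<subseteq> V" "card T = k"
      using 0 T assms(3) unfolding ksubsets_def by auto
    have fin: "finite S" "finite T"
      using S(1) T'(1) assms(1) rev_finite_subset by blast+
    then have "S \<subseteq> T"
      using "0.prems"(2) by simp
    then have "S = T"
      using card_subset_eq[OF fin(2)] S(2) T'(2) by simp
    then show ?case using "0.prems"(1) by simp
  next
    case (Suc n)
    have S: "S \<subseteq> V" "card S = k"
      using Suc.prems(1) assms(3) unfolding ksubsets_def by auto
    have T': "T \<subseteq> V" "card T = k"
      using T unfolding ksubsets_def by auto
    have fin: "finite S" "finite T"
      using S(1) T'(1) assms(1) rev_finite_subset by blast+
    obtain a where a: "a \<in> S - T"
      using Suc.prems(2) by (metis card.empty ex_in_conv nat.distinct(1))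
    have "\<not> T \<subseteq> S"
    proof
      assume "T \<subseteq> S"
      then have "T = S" using card_subset_eq[OF fin(1)] S(2) T'(2) by simp
      then show False using a by blast
    qed
    then obtain b where b: "b \<in> T - S" by blast
    have "insert b (S - {a}) \<in> A"
      using closed[OF Suc.prems(1)] a b T(2) T'(1) by blast
    moreover have "insert b (S - {a}) - T = (S - T) - {a}"
      using b by blast
    then have "card (insert b (S - {a}) - T) = n"
      using Suc.prems(2) a fin by simp
    ultimately show ?case by (rule Suc.IH)
  qed
  show "{S \<in> ksubsets V k. U \<subseteq> S} \<subseteq> A"
    using reach assms(2) by blast
qed (use assms(3) in simp)

lemma exists_exchange_across:
  assumes "S \<subseteq> V" "S \<noteq> {}" "S \<noteq> V" "W \<subseteq> V" "W \<noteq> {}" "W \<noteq> V"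
  shows "(\<exists>a b. a \<in> S \<inter> W \<and> b \<in> V - W - S) \<or> (\<exists>a b. a \<in> S \<inter> (V - W) \<and> b \<in> V - (V - W) - S)"
proof (cases "S \<inter> W = {}")
  case True
  then show ?thesis using assms by blast
next
  case False
  then obtain a where "a \<in> S \<inter> W" by blast
  show ?thesis
  proof (cases "V - W \<subseteq> S")
    case True
    then show ?thesis using assms by blast
  next
    case False
    then show ?thesis using \<open>a \<in> S \<inter> W\<close> by blast
  qed
qed

lemma orbit_invariant:
  assumes "perm_group_on V G" "h \<in> G"
  shows "h ` ((\<lambda>g. g x) ` G) = (\<lambda>g. g x) ` G"
proof
  have closed: "\<forall>g\<in>G. \<forall>g'\<in>G. g \<circ> g' \<in> G" "inv h \<in> G" "h permutes V"
    using assms unfolding perm_group_on_def by auto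
  show "h ` ((\<lambda>g. g x) ` G) \<subseteq> (\<lambda>g. g x) ` G"
  proof
    fix z assume "z \<in> h ` ((\<lambda>g. g x) ` G)"
    then obtain g where "g \<in> G" "z = (h \<circ> g) x" by auto
    then show "z \<in> (\<lambda>g. g x) ` G" using closed(1) assms(2) by blast
  qed
  show "(\<lambda>g. g x) ` G \<subseteq> h ` ((\<lambda>g. g x) ` G)"
  proof
    fix z assume "z \<in> (\<lambda>g. g x) ` G"
    then obtain g where g: "g \<in> G" "z = g x" by blast
    then have "z = h ((inv h \<circ> g) x)"
      using permutes_inverses(1)[OF closed(3)] by simp
    moreover have "inv h \<circ> g \<in> G"
      using closed g(1) by blast
    ultimately show "z \<in> h ` ((\<lambda>g. g x) ` G)" by blast
  qed
qed

lemma invariant_proper_subset_if_intransitive: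
  assumes "perm_group_on V G" "\<not> point_transitive G V"
  shows "\<exists>W. W \<subseteq> V \<and> W \<noteq> {} \<and> W \<noteq> V \<and> (\<forall>g\<in>G. g ` W = W)"
proof -
  obtain x y where xy: "x \<in> V" "y \<in> V" "\<forall>g\<in>G. g x \<noteq> y"
    using assms(2) unfolding point_transitive_def by blast
  define W where "W = (\<lambda>g. g x) ` G"
  have "W \<subseteq> V"
  proof
    fix z assume "z \<in> W"
    then obtain g where "g \<in> G" "z = g x" unfolding W_def by blast
    then show "z \<in> V"
      using assms(1) xy(1) permutes_in_image unfolding perm_group_on_def by metis
  qed
  moreover have "x \<in> W"
    using assms(1) unfolding W_def perm_group_on_def by (metis id_apply image_eqI)
  moreover have "y \<notin> W"
    using xy(3) unfolding W_def by blast
  moreover have "\<forall>g\<in>G. g ` W = W"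
    using orbit_invariant[OF assms(1)] unfolding W_def by blast
  ultimately show ?thesis
    using xy(2) by blast
qed

lemma permutes_image_Diff_invariant:
  assumes "g permutes V" "g ` W = W"
  shows "g ` (V - W) = V - W"
  using assms by (simp add: image_set_diff permutes_inj permutes_image)

lemma invariant_subset_with_leaving_exchange:
  assumes "perm_group_on V G" "\<not> point_transitive G V" "S \<subseteq> V" "S \<noteq> {}" "S \<noteq> V"
  shows "\<exists>U. U \<subseteq> V \<and> (\<forall>g\<in>G. g ` U = U) \<and> (\<exists>a b. a \<in> S \<inter> U \<and> b \<in> V - U - S)"
proof -
  obtain W where W: "W \<subseteq> V" "W \<noteq> {}" "W \<noteq> V" "\<forall>g\<in>G. g ` W = W"
    using invariant_proper_subset_if_intransitive[OF assms(1,2)] by blast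
  have permutes: "\<forall>g\<in>G. g permutes V"
    using assms(1) by (simp add: perm_group_on_def)
  have "\<forall>g\<in>G. g ` (V - W) = V - W"
  proof
    fix g assume "g \<in> G"
    then show "g ` (V - W) = V - W"
      using permutes_image_Diff_invariant[OF bspec[OF permutes] bspec[OF W(4)]] by blast
  qed
  moreover have "V - W \<subseteq> V" by blast
  ultimately show ?thesis
    using exists_exchange_across[OF assms(3-5) W(1-3)] W(1,4) by blast
qed

lemma neighbour_level:
  assumes "finite V" "\<Gamma> \<subseteq> ksubsets V k"
    and "set_transitive G (neighbour_set V k \<Gamma>)" "\<forall>g\<in>G. inj g \<and> g ` W = W"
    and level: "\<forall>S\<in>\<Gamma>. card (S \<inter> W) = c"
    and "S \<in> \<Gamma>" "a \<in> S \<inter> W" "b \<in> V - W - S"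
  shows "\<forall>T\<in>neighbour_set V k \<Gamma>. card (T \<inter> W) + 1 = c"
proof
  have "finite S"
    using ksubsets_finite[OF assms(1)] assms(2,6) by blast
  then have "card (insert b (S - {a}) \<inter> W) + 1 = card (S \<inter> W)"
    using card_Int_exchange[of S a b W] assms(7,8) by simp
  then have lowered: "card (insert b (S - {a}) \<inter> W) + 1 = c"
    using level assms(6) by metis
  have "insert b (S - {a}) \<notin> \<Gamma>"
  proof
    assume "insert b (S - {a}) \<in> \<Gamma>"
    then have "card (insert b (S - {a}) \<inter> W) = c" using level by blast
    then show False using lowered by linarith
  qed
  moreover have "a \<in> S" "b \<in> V - S"
    using assms(7,8) by auto
  ultimately have neighbour: "insert b (S - {a}) \<in> neighbour_set V k \<Gamma>"
    using exchange_in_neighbour_set[OF assms(1,2,6)] by blast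
  fix T assume "T \<in> neighbour_set V k \<Gamma>"
  then have "card (T \<inter> W) = card (insert b (S - {a}) \<inter> W)"
    by (rule card_Int_const_if_set_transitive[OF assms(3,4) _ neighbour])
  then show "card (T \<inter> W) + 1 = c"
    using lowered by linarith
qed

lemma exchange_stays_in_code:
  assumes "finite V" "\<Gamma> \<subseteq> ksubsets V k"
    and level: "\<forall>S\<in>\<Gamma>. card (S \<inter> W) = c"
    and neighbour_level: "\<forall>T\<in>neighbour_set V k \<Gamma>. card (T \<inter> W) + 1 = c"
    and "S \<in> \<Gamma>" "a \<in> S" "b \<in> V - S" "a \<in> W \<longleftrightarrow> b \<in> W"
  shows "insert b (S - {a}) \<in> \<Gamma>"
proof (rule ccontr)
  assume "insert b (S - {a}) \<notin> \<Gamma>"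
  then have "card (insert b (S - {a}) \<inter> W) + 1 = c"
    using exchange_in_neighbour_set[OF assms(1,2,5-7)] neighbour_level by blast
  moreover have "finite S"
    using ksubsets_finite[OF assms(1)] assms(2,5) by blast
  then have "card (insert b (S - {a}) \<inter> W) = card (S \<inter> W)"
    using card_Int_exchange[of S a b W] assms(6-8) by (cases "a \<in> W") simp_all
  then have "card (insert b (S - {a}) \<inter> W) = c"
    using level assms(5) by simp
  ultimately show False by simp
qed

lemma code_member_inside_or_contains:
  assumes "finite V" "\<Gamma> \<subseteq> ksubsets V k" "W \<subseteq> V"
    and level: "\<forall>S\<in>\<Gamma>. card (S \<inter> W) = c"
    and neighbour_level: "\<forall>T\<in>neighbour_set V k \<Gamma>. card (T \<inter> W) + 1 = c"
    and "S \<in> \<Gamma>"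
  shows "S \<subseteq> W \<or> W \<subseteq> S"
proof (rule ccontr)
  assume "\<not> (S \<subseteq> W \<or> W \<subseteq> S)"
  then obtain a b where ab: "a \<in> S - W" "b \<in> W - S" by blast
  have "finite S"
    using ksubsets_finite[OF assms(1)] assms(2,6) by blast
  then have "card (insert b (S - {a}) \<inter> W) = card (S \<inter> W) + 1"
    using card_Int_exchange[of S a b W] ab by simp
  then have raised: "card (insert b (S - {a}) \<inter> W) = c + 1"
    using level assms(6) by simp
  have "insert b (S - {a}) \<notin> \<Gamma>"
  proof
    assume "insert b (S - {a}) \<in> \<Gamma>"
    then show False using level raised by simp
  qed
  then have "card (insert b (S - {a}) \<inter> W) + 1 = c"
    using exchange_in_neighbour_set[OF assms(1,2,6)] ab assms(3) neighbour_level by blast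
  then show False
    using raised by simp
qed

lemma code_eq_ksubsets_if_inside:
  assumes "finite V" "\<Gamma> \<subseteq> ksubsets V k" "\<Gamma> \<noteq> {}" "W \<subseteq> V"
    and level: "\<forall>S\<in>\<Gamma>. card (S \<inter> W) = k"
    and neighbour_level: "\<forall>T\<in>neighbour_set V k \<Gamma>. card (T \<inter> W) + 1 = k"
  shows "\<Gamma> = ksubsets W k"
proof -
  have inside: "\<Gamma> \<subseteq> {S \<in> ksubsets W k. {} \<subseteq> S}"
  proof
    fix S assume S: "S \<in> \<Gamma>"
    then have "finite S" "card S = k"
      using ksubsets_finite[OF assms(1)] assms(2) unfolding ksubsets_def by auto
    then have "S \<inter> W = S"
      using level S by (metis Int_lower1 card_subset_eq)
    then show "S \<in> {S \<in> ksubsets W k. {} \<subseteq> S}"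
      using \<open>card S = k\<close> unfolding ksubsets_def by blast
  qed
  have "\<Gamma> = {S \<in> ksubsets W k. {} \<subseteq> S}"
  proof (rule exchange_closed_family_eq[OF finite_subset[OF assms(4,1)] assms(3) inside])
    fix S a b assume "S \<in> \<Gamma>" "a \<in> S - {}" "b \<in> W - S"
    moreover have "S \<subseteq> W"
      using inside \<open>S \<in> \<Gamma>\<close> unfolding ksubsets_def by blast
    ultimately show "insert b (S - {a}) \<in> \<Gamma>"
      using exchange_stays_in_code[OF assms(1,2) level neighbour_level] assms(4) by blast
  qed
  then show ?thesis by simp
qed

lemma code_eq_supersets_if_contains:
  assumes "finite V" "\<Gamma> \<subseteq> ksubsets V k" "\<Gamma> \<noteq> {}" "W \<subseteq> V"
    and level: "\<forall>S\<in>\<Gamma>. card (S \<inter> W) = card W"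
    and neighbour_level: "\<forall>T\<in>neighbour_set V k \<Gamma>. card (T \<inter> W) + 1 = card W"
  shows "\<Gamma> = {S \<in> ksubsets V k. W \<subseteq> S}"
proof -
  have "finite W"
    using assms(1,4) finite_subset by blast
  have contains: "\<Gamma> \<subseteq> {S \<in> ksubsets V k. W \<subseteq> S}"
  proof
    fix S assume S: "S \<in> \<Gamma>"
    then have "S \<inter> W = W"
      using level \<open>finite W\<close> by (metis Int_lower2 card_subset_eq)
    then show "S \<in> {S \<in> ksubsets V k. W \<subseteq> S}"
      using S assms(2) by blast
  qed
  show ?thesis
  proof (rule exchange_closed_family_eq[OF assms(1,3) contains])
    fix S a b assume "S \<in> \<Gamma>" "a \<in> S - W" "b \<in> V - S"
    moreover have "W \<subseteq> S"
      using contains \<open>S \<in> \<Gamma>\<close> by blast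
    ultimately show "insert b (S - {a}) \<in> \<Gamma>"
      using exchange_stays_in_code[OF assms(1,2) level neighbour_level] by blast
  qed
qed

lemma neighbour_transitive_code_eq_ksubsets_or_supersets:
  assumes "finite V" "is_code V k \<Gamma>" "perm_group_on V G" "neighbour_transitive V k G \<Gamma>"
    and "W \<subseteq> V" "\<forall>g\<in>G. g ` W = W"
    and "S \<in> \<Gamma>" "a \<in> S \<inter> W" "b \<in> V - W - S"
  shows "\<Gamma> = ksubsets W k \<or> \<Gamma> = {S \<in> ksubsets V k. W \<subseteq> S}"
proof -
  have code: "\<Gamma> \<subseteq> ksubsets V k" "\<Gamma> \<noteq> {}"
    using assms(2) unfolding is_code_def by auto
  have invariant: "\<forall>g\<in>G. inj g \<and> g ` W = W"
    using assms(3,6) permutes_inj unfolding perm_group_on_def by blast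
  have level: "\<forall>S'\<in>\<Gamma>. card (S' \<inter> W) = card (S \<inter> W)"
    using card_Int_const_if_set_transitive[OF _ invariant _ assms(7)] assms(4)
    unfolding neighbour_transitive_def by blast
  have neighbour_level: "\<forall>T\<in>neighbour_set V k \<Gamma>. card (T \<inter> W) + 1 = card (S \<inter> W)"
    using neighbour_level[OF assms(1) code(1) _ invariant level assms(7-9)] assms(4)
    unfolding neighbour_transitive_def by blast
  have "finite S" "card S = k"
    using ksubsets_finite[OF assms(1)] code(1) assms(7) unfolding ksubsets_def by auto
  consider "S \<subseteq> W" | "W \<subseteq> S"
    using code_member_inside_or_contains[OF assms(1) code(1) assms(5) level neighbour_level assms(7)]
    by blast
  then show ?thesis
  proof cases
    case 1
    then have "card (S \<inter> W) = k"
      using \<open>card S = k\<close> by (simp add: Int_absorb2)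
    then show ?thesis
      using code_eq_ksubsets_if_inside[OF assms(1) code assms(5)] level neighbour_level by simp
  next
    case 2
    then have "card (S \<inter> W) = card W"
      by (simp add: Int_absorb1)
    then show ?thesis
      using code_eq_supersets_if_contains[OF assms(1) code assms(5)] level neighbour_level by simp
  qed
qed

lemma ksubsets_card_self:
  assumes "finite W"
  shows "ksubsets W (card W) = {W}"
  using card_subset_eq[OF assms] unfolding ksubsets_def by auto

lemma supersets_card_self:
  assumes "finite V" "W \<subseteq> V"
  shows "{S \<in> ksubsets V (card W). W \<subseteq> S} = {W}"
proof -
  have "S = W" if "S \<subseteq> V" "card S = card W" "W \<subseteq> S" for S
    using card_subset_eq[OF finite_subset[OF that(1) assms(1)] that(3)] that(2) by simp
  then show ?thesis
    using assms(2) unfolding ksubsets_def by auto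
qed

lemma ksubsets_or_supersets_cases:
  assumes "finite V" "W \<subseteq> V" "\<Gamma> \<noteq> {}"
    and "\<Gamma> = ksubsets W k \<or> \<Gamma> = {S \<in> ksubsets V k. W \<subseteq> S}"
  shows "(card W > k \<longrightarrow> \<Gamma> = ksubsets W k) \<and> (card W = k \<longrightarrow> \<Gamma> = {W}) \<and>
    (card W < k \<longrightarrow> \<Gamma> = {S \<in> ksubsets V k. W \<subseteq> S})"
proof -
  have "finite W"
    using assms(1,2) finite_subset by blast
  obtain S where S: "S \<in> \<Gamma>"
    using assms(3) by blast
  from assms(4) show ?thesis
  proof
    assume \<Gamma>: "\<Gamma> = ksubsets W k"
    then have "S \<subseteq> W" "card S = k"
      using S unfolding ksubsets_def by auto
    then have "k \<le> card W"
      using card_mono[OF \<open>finite W\<close>] by metis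
    moreover have "\<Gamma> = {W}" if "card W = k"
      unfolding \<Gamma> using ksubsets_card_self[OF \<open>finite W\<close>] by (simp add: that[symmetric])
    ultimately show ?thesis
      using \<Gamma> by simp
  next
    assume \<Gamma>: "\<Gamma> = {S \<in> ksubsets V k. W \<subseteq> S}"
    then have "S \<in> ksubsets V k" "W \<subseteq> S"
      using S by auto
    then have "card W \<le> k"
      using card_mono ksubsets_finite[OF assms(1)] unfolding ksubsets_def by blast
    moreover have "\<Gamma> = {W}" if "card W = k"
      unfolding \<Gamma> using supersets_card_self[OF assms(1,2)] by (simp add: that[symmetric])
    ultimately show ?thesis
      using \<Gamma> by simp
  qed
qed

theorem proposition3p3:
  fixes V :: "'a set" and k :: nat and \<Gamma> :: "'a set set" and G :: "('a \<Rightarrow> 'a) set"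
  assumes "finite V"
    and "2 \<le> k" and "k + 2 \<le> card V"
    and "is_code V k \<Gamma>"
    and "perm_group_on V G"
    and "stabilises G \<Gamma>"
    and "neighbour_transitive V k G \<Gamma>"
    and "\<not> point_transitive G V"
  shows "\<exists>U. U \<subset> V \<and> U \<noteq> {} \<and>
           (card U > k \<longrightarrow> \<Gamma> = ksubsets U k) \<and>
           (card U = k \<longrightarrow> \<Gamma> = {U}) \<and>
           (card U < k \<longrightarrow> \<Gamma> = {S \<in> ksubsets V k. U \<subseteq> S})"
proof -
  have code: "\<Gamma> \<subseteq> ksubsets V k" "\<Gamma> \<noteq> {}"
    using assms(4) unfolding is_code_def by blast+
  then obtain S where S: "S \<in> \<Gamma>" "S \<subseteq> V" "card S = k"
    unfolding ksubsets_def by blast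
  then have "S \<noteq> {}" "S \<noteq> V"
    using assms(2,3) by auto
  then obtain U a b where U: "U \<subseteq> V" "\<forall>g\<in>G. g ` U = U"
    and ab: "a \<in> S \<inter> U" "b \<in> V - U - S"
    using invariant_subset_with_leaving_exchange[OF assms(5,8) S(2)] by blast
  have "\<Gamma> = ksubsets U k \<or> \<Gamma> = {S \<in> ksubsets V k. U \<subseteq> S}"
    using neighbour_transitive_code_eq_ksubsets_or_supersets[OF assms(1,4,5,7) U S(1) ab] .
  then have "(card U > k \<longrightarrow> \<Gamma> = ksubsets U k) \<and> (card U = k \<longrightarrow> \<Gamma> = {U}) \<and>
      (card U < k \<longrightarrow> \<Gamma> = {S \<in> ksubsets V k. U \<subseteq> S})"
    by (rule ksubsets_or_supersets_cases[OF assms(1) U(1) code(2)])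
  moreover have "U \<subset> V" "U \<noteq> {}"
    using U(1) ab by blast+
  ultimately show ?thesis
    by blast
qed

end
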